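(* Let $\Gamma$ be a weighted digraph with normalized matrix of maximum out-forests $\bar J$, let $K$ be the vertex set of a basis bicomponent of $\Gamma$, and let $K^+$ be the set of vertices reachable by directed paths from $K$ and unreachable from all other basis bicomponents. Then: (1) the normalized matrix of maximum out-forests of the restriction $\Gamma_K$ of $\Gamma$ to $K$ coincides with the principal submatrix of $\bar J$ indexed by $K$; (2) if $i\in K^+$ and $j\in K^+\setminus K$ and $\Gamma$ has an arc $(i,j)$, then $\bar J$ does not change when the (positive) weight of this arc is varied.
   Context: A weighted digraph $\Gamma$ has no loops and each arc $(i,j)$ (from $i$ to $j$) has a positive weight. A diverging tree is a rooted directed tree with directed paths from its root to all its other vertices; an out-forest of a digraph is a spanning subgraph whose weak components are diverging trees; a maximum out-forest is one with the maximum number of arcs. The weight of a subgraph is the product of its arc weights. The normalized matrix of maximum out-forests $\bar J$ of a digraph has $(i,j)$ entry equal to the total weight of its maximum out-forests in which $i$ belongs to the tree rooted at $j$, divided by the total weight of all its maximum out-forests. A basis bicomponent is a strong component into which no arc enters from outside it. *)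

theory Defs
  imports Complex_Main
begin

definition weighted_digraph :: "'a set \<Rightarrow> ('a \<times> 'a) set \<Rightarrow> ('a \<times> 'a \<Rightarrow> real) \<Rightarrow> bool" where
  "weighted_digraph V E w \<longleftrightarrow> finite V \<and> E \<subseteq> V \<times> V \<and> (\<forall>v. (v, v) \<notin> E) \<and> (\<forall>e\<in>E. w e > 0)"

definition weak_component :: "'a set \<Rightarrow> ('a \<times> 'a) set \<Rightarrow> 'a \<Rightarrow> 'a set" where
  "weak_component V F v = {u \<in> V. (v, u) \<in> (F \<union> F\<inverse>)\<^sup>*}"

definition diverging_tree :: "'a set \<Rightarrow> ('a \<times> 'a) set \<Rightarrow> bool" where
  "diverging_tree C F \<longleftrightarrow> finite C \<and> C \<noteq> {} \<and> card F = card C - 1 \<and> F \<subseteq> C \<times> C \<and>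
     (\<exists>r\<in>C. \<forall>v\<in>C. (r, v) \<in> F\<^sup>*)"

definition out_forest :: "'a set \<Rightarrow> ('a \<times> 'a) set \<Rightarrow> ('a \<times> 'a) set \<Rightarrow> bool" where
  "out_forest V E F \<longleftrightarrow> F \<subseteq> E \<and>
     (\<forall>v\<in>V. diverging_tree (weak_component V F v)
                (F \<inter> (weak_component V F v \<times> weak_component V F v)))"

definition max_out_forests :: "'a set \<Rightarrow> ('a \<times> 'a) set \<Rightarrow> ('a \<times> 'a) set set" where
  "max_out_forests V E = {F. out_forest V E F \<and> (\<forall>G. out_forest V E G \<longrightarrow> card G \<le> card F)}"

definition subgraph_weight :: "('a \<times> 'a \<Rightarrow> real) \<Rightarrow> ('a \<times> 'a) set \<Rightarrow> real" where
  "subgraph_weight w F = (\<Prod>e\<in>F. w e)"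

definition in_tree_rooted_at :: "('a \<times> 'a) set \<Rightarrow> 'a \<Rightarrow> 'a \<Rightarrow> bool" where
  "in_tree_rooted_at F i j \<longleftrightarrow> (j, i) \<in> F\<^sup>* \<and> (\<forall>k. (k, j) \<notin> F)"

definition Jbar :: "'a set \<Rightarrow> ('a \<times> 'a) set \<Rightarrow> ('a \<times> 'a \<Rightarrow> real) \<Rightarrow> 'a \<Rightarrow> 'a \<Rightarrow> real" where
  "Jbar V E w i j =
     (\<Sum>F\<in>{F\<in>max_out_forests V E. in_tree_rooted_at F i j}. subgraph_weight w F)
     / (\<Sum>F\<in>max_out_forests V E. subgraph_weight w F)"

definition strong_component :: "'a set \<Rightarrow> ('a \<times> 'a) set \<Rightarrow> 'a \<Rightarrow> 'a set" where
  "strong_component V E v = {u \<in> V. (u, v) \<in> E\<^sup>* \<and> (v, u) \<in> E\<^sup>*}"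

definition basis_bicomponent :: "'a set \<Rightarrow> ('a \<times> 'a) set \<Rightarrow> 'a set \<Rightarrow> bool" where
  "basis_bicomponent V E K \<longleftrightarrow> (\<exists>v\<in>V. K = strong_component V E v) \<and>
     (\<forall>u v. (u, v) \<in> E \<and> u \<notin> K \<and> v \<in> K \<longrightarrow> False)"

definition reach_plus :: "'a set \<Rightarrow> ('a \<times> 'a) set \<Rightarrow> 'a set \<Rightarrow> 'a set" where
  "reach_plus V E K = {v \<in> V. (\<exists>k\<in>K. (k, v) \<in> E\<^sup>*) \<and>
     (\<forall>K'. basis_bicomponent V E K' \<and> K' \<noteq> K \<longrightarrow> \<not> (\<exists>k\<in>K'. (k, v) \<in> E\<^sup>*))}"

end

theory Submission
  imports Defs
begin

(*
  Let K be a basis bicomponent, K^+ the vertices reachable from K only, D = K^+ - K.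

  An arc set F is an out-forest iff every vertex has at most one entering arc
  and F is acyclic; the roots of F are the vertices without entering arc.  In a maximum
  out-forest every E-ancestor of a root lies in the tree of that root (an exchange
  argument, by induction on the size of the tree).  Hence a maximum out-forest has
  exactly one root in K, and every vertex of D has an entering arc.

  Both claims follow from one factorisation principle: if the family M of maximum
  out-forests is closed under exchanging the parts lying in an arc set A, weights are
  multiplicative, and "i lies in the tree rooted at j" depends only on the part outside
  A, then the A-parts cancel from the normalised sums defining Jbar.
  (1) With A the arcs outside K x K, the remaining parts are exactly the maximum
      out-forests of the restriction to K (no arc enters K).
  (2) With A the arcs entering D, the weights of these arcs drop out of Jbar.
*)

section \<open>Reachability and branchings\<close>

definition pred_closed :: "('a \<times> 'a) set \<Rightarrow> 'a set \<Rightarrow> bool" where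
  "pred_closed G S \<longleftrightarrow> (\<forall>u v. (u, v) \<in> G \<longrightarrow> v \<in> S \<longrightarrow> u \<in> S)"

definition in_deg_le1 :: "('a \<times> 'a) set \<Rightarrow> bool" where
  "in_deg_le1 F \<longleftrightarrow> (\<forall>u u' v. (u, v) \<in> F \<longrightarrow> (u', v) \<in> F \<longrightarrow> u = u')"

lemma pred_closed_subset: "pred_closed E S \<Longrightarrow> G \<subseteq> E \<Longrightarrow> pred_closed G S"
  unfolding pred_closed_def by blast

lemma in_deg_le1_subset: "in_deg_le1 F \<Longrightarrow> G \<subseteq> F \<Longrightarrow> in_deg_le1 G"
  unfolding in_deg_le1_def by blast

lemma in_deg_le1_insert: "in_deg_le1 F \<Longrightarrow> \<forall>a. (a, x) \<notin> F \<Longrightarrow> in_deg_le1 (insert (u, x) F)"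
  unfolding in_deg_le1_def by blast

lemma rtrancl_pred_closed_inside:
  assumes "pred_closed G S" "(x, y) \<in> G\<^sup>*" "y \<in> S"
  shows "(x, y) \<in> (Restr G S)\<^sup>* \<and> x \<in> S"
  using assms(2)
proof (induction rule: converse_rtrancl_induct)
  case base then show ?case using assms(3) by simp
next
  case (step x x')
  then have "x \<in> S" using assms(1) unfolding pred_closed_def by blast
  with step show ?case by (blast intro: converse_rtrancl_into_rtrancl)
qed

lemma rtrancl_pred_closed_outside:
  assumes "pred_closed G S" "(x, y) \<in> G\<^sup>*" "x \<notin> S"
  shows "(x, y) \<in> (Restr G (- S))\<^sup>* \<and> y \<notin> S"
  using assms(2)
proof (induction rule: rtrancl_induct)
  case base then show ?case using assms(3) by simp
next
  case (step y z)
  then have "z \<notin> S" using assms(1) unfolding pred_closed_def by blast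
  with step show ?case by (blast intro: rtrancl_into_rtrancl)
qed

text \<open>A cycle cannot leave a predecessor-closed set and come back, so acyclicity can be
  checked separately inside and outside it.\<close>
lemma acyclic_pred_closed_split:
  assumes pc: "pred_closed G S" and "acyclic (Restr G S)" and "acyclic (Restr G (- S))"
  shows "acyclic G"
  unfolding acyclic_def
proof (intro allI notI)
  fix x assume cyc: "(x, x) \<in> G\<^sup>+"
  show False
  proof (cases "x \<in> S")
    case True
    obtain x' where x': "(x, x') \<in> G" "(x', x) \<in> G\<^sup>*" using tranclD[OF cyc] by blast
    have "(x', x) \<in> (Restr G S)\<^sup>* \<and> x' \<in> S" using rtrancl_pred_closed_inside[OF pc x'(2) True] .
    then have "(x, x) \<in> (Restr G S)\<^sup>+" using x'(1) True by (blast intro: rtrancl_into_trancl2)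
    then show False using assms(2) by (simp add: acyclic_def)
  next
    case False
    obtain q where q: "(x, q) \<in> G\<^sup>*" "(q, x) \<in> G" using tranclD2[OF cyc] by blast
    have "(x, q) \<in> (Restr G (- S))\<^sup>* \<and> q \<notin> S" using rtrancl_pred_closed_outside[OF pc q(1) False] .
    then have "(x, x) \<in> (Restr G (- S))\<^sup>+" using q(2) False by (blast intro: rtrancl_into_trancl1)
    then show False using assms(3) by (simp add: acyclic_def)
  qed
qed

lemma rtrancl_enters_set:
  assumes "(z, v) \<in> E\<^sup>*" "z \<notin> T" "v \<in> T"
  shows "\<exists>u x. (u, x) \<in> E \<and> u \<notin> T \<and> x \<in> T"
  using assms(1,3)
proof (induction rule: rtrancl_induct)
  case base then show ?case using assms(2) by simp
next
  case (step y v')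
  show ?case
  proof (cases "y \<in> T")
    case True then show ?thesis using step(3) by blast
  next
    case False then show ?thesis using step(2,4) by blast
  qed
qed

lemma reach_root_eq:
  assumes "(a, b) \<in> F\<^sup>*" "\<forall>k. (k, b) \<notin> F"
  shows "a = b"
  using assms by (metis rtranclE)

lemma ancestors_comparable:
  assumes "in_deg_le1 F" "(a, y) \<in> F\<^sup>*" "(b, y) \<in> F\<^sup>*"
  shows "(a, b) \<in> F\<^sup>* \<or> (b, a) \<in> F\<^sup>*"
  using assms(2,3)
proof (induction rule: rtrancl_induct)
  case base then show ?case by simp
next
  case (step y z)
  show ?case
  proof (cases "b = z")
    case True then show ?thesis using step(1,2) by (simp add: rtrancl.rtrancl_into_rtrancl)
  next
    case False
    then have "(b, z) \<in> F\<^sup>+" using step(4) by (simp add: rtrancl_eq_or_trancl)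
    then obtain q where "(b, q) \<in> F\<^sup>*" "(q, z) \<in> F" using tranclD2 by metis
    then have "q = y" using step(2) assms(1) unfolding in_deg_le1_def by blast
    then show ?thesis using step \<open>(b, q) \<in> F\<^sup>*\<close> by blast
  qed
qed

lemma in_tree_root_exists:
  assumes "finite F" "acyclic F"
  shows "\<exists>j. in_tree_rooted_at F i j"
proof -
  have "wf F" by (rule finite_acyclic_wf[OF assms])
  then obtain z where z: "(z, i) \<in> F\<^sup>*" "\<And>y. (y, z) \<in> F \<Longrightarrow> (y, i) \<notin> F\<^sup>*"
    by (rule wfE_min[of F i "{a. (a, i) \<in> F\<^sup>*}", simplified]) blast
  have "\<forall>k. (k, z) \<notin> F" using z by (blast intro: converse_rtrancl_into_rtrancl)
  then show ?thesis using z(1) unfolding in_tree_rooted_at_def by blast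
qed

lemma in_tree_root_unique:
  assumes "in_deg_le1 F" "in_tree_rooted_at F i j" "in_tree_rooted_at F i j'"
  shows "j = j'"
proof -
  have "(j, i) \<in> F\<^sup>*" "(j', i) \<in> F\<^sup>*" "\<forall>k. (k, j) \<notin> F" "\<forall>k. (k, j') \<notin> F"
    using assms(2,3) unfolding in_tree_rooted_at_def by auto
  then show ?thesis using ancestors_comparable[OF assms(1)] reach_root_eq by metis
qed

lemma cycle_reaches_ancestors:
  assumes "in_deg_le1 F" "(x, x) \<in> F\<^sup>+" "(y, x) \<in> F\<^sup>*"
  shows "(x, y) \<in> F\<^sup>*"
  using assms(3)
proof (induction rule: converse_rtrancl_induct)
  case base then show ?case by simp
next
  case (step y y')
  show ?case
  proof (cases "x = y'")
    case True
    obtain q where "(x, q) \<in> F\<^sup>*" "(q, x) \<in> F" using tranclD2[OF assms(2)] by blast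
    then show ?thesis using True step(1) assms(1) unfolding in_deg_le1_def by blast
  next
    case False
    then have "(x, y') \<in> F\<^sup>+" using step(3) by (simp add: rtrancl_eq_or_trancl)
    then obtain q where "(x, q) \<in> F\<^sup>*" "(q, y') \<in> F" using tranclD2 by metis
    then show ?thesis using step(1) assms(1) unfolding in_deg_le1_def by blast
  qed
qed

lemma weak_component_common_root:
  assumes fin: "finite F" and ind: "in_deg_le1 F" and ac: "acyclic F"
    and r: "in_tree_rooted_at F v r" and vy: "(v, y) \<in> (F \<union> F\<inverse>)\<^sup>*"
  shows "in_tree_rooted_at F y r"
  using vy
proof (induction rule: rtrancl_induct)
  case base then show ?case using r by simp
next
  case (step y z)
  have ry: "(r, y) \<in> F\<^sup>*" and rr: "\<forall>k. (k, r) \<notin> F"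
    using step(3) unfolding in_tree_rooted_at_def by auto
  show ?case
  proof (cases "(y, z) \<in> F")
    case True
    then show ?thesis using ry rr unfolding in_tree_rooted_at_def by (simp add: rtrancl_into_rtrancl)
  next
    case False
    then have zy: "(z, y) \<in> F" using step(2) by blast
    obtain r' where r': "in_tree_rooted_at F z r'" using in_tree_root_exists[OF fin ac] by blast
    then have "in_tree_rooted_at F y r'"
      using zy unfolding in_tree_rooted_at_def by (blast intro: rtrancl_into_rtrancl)
    then have "r' = r" using in_tree_root_unique[OF ind _ step(3)] by blast
    then show ?thesis using r' by simp
  qed
qed


section \<open>Out-forests are the acyclic arc sets of in-degree at most one\<close>

lemma weak_component_pred_closed:
  assumes "F \<subseteq> V \<times> V"
  shows "pred_closed F (weak_component V F v)"
  unfolding pred_closed_def weak_component_def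
  using assms by (blast intro: rtrancl_into_rtrancl)

text \<open>A diverging tree has a root without entering arc, and no vertex has two entering
  arcs: its |C| - 1 arcs must enter the |C| - 1 non-root vertices.\<close>
lemma diverging_tree_root:
  assumes "diverging_tree C T"
  shows "\<exists>r\<in>C. (\<forall>y\<in>C. (r, y) \<in> T\<^sup>*) \<and> (\<forall>p. (p, r) \<notin> T) \<and> inj_on snd T"
proof -
  obtain r where r: "r \<in> C" "\<forall>y\<in>C. (r, y) \<in> T\<^sup>*"
    using assms unfolding diverging_tree_def by blast
  have finC: "finite C" and cardT: "card T = card C - 1" and TC: "T \<subseteq> C \<times> C"
    using assms unfolding diverging_tree_def by auto
  have finT: "finite T" using finC TC finite_subset by blast
  have entered: "C - {r} \<subseteq> snd ` T"
  proof
    fix y assume y: "y \<in> C - {r}"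
    then have "(r, y) \<in> T\<^sup>+" using r(2) by (auto simp: rtrancl_eq_or_trancl)
    then obtain q where "(q, y) \<in> T" using tranclD2 by metis
    then show "y \<in> snd ` T" by force
  qed
  have c1: "card (snd ` T) \<le> card T" using finT card_image_le by blast
  have c2: "card (C - {r}) = card C - 1" using r(1) finC by simp
  have c3: "card (C - {r}) \<le> card (snd ` T)" using entered finT card_mono by blast
  have "inj_on snd T" using c1 c2 c3 cardT finT inj_on_iff_eq_card by fastforce
  moreover have "C - {r} = snd ` T"
    using card_subset_eq[OF finite_imageI[OF finT] entered] c1 c2 c3 cardT by linarith
  then have "\<forall>p. (p, r) \<notin> T" by force
  ultimately show ?thesis using r by blast
qed

text \<open>A finite digraph without weights: the combinatorics of out-forests does not
  depend on them.\<close>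
locale finite_digraph =
  fixes V :: "'a set" and E :: "('a \<times> 'a) set"
  assumes finite_V: "finite V" and arcs_in_V: "E \<subseteq> V \<times> V"
begin

lemma finite_E: "finite E"
  using finite_subset[OF arcs_in_V] finite_V by simp

lemma out_forest_imp_branching:
  assumes of: "out_forest V E F"
  shows "F \<subseteq> E \<and> in_deg_le1 F \<and> acyclic F"
proof -
  have FE: "F \<subseteq> E" using of unfolding out_forest_def by blast
  then have FV: "F \<subseteq> V \<times> V" using arcs_in_V by blast
  have comp: "\<exists>r\<in>C. (\<forall>y\<in>C. (r, y) \<in> (Restr F C)\<^sup>*) \<and> (\<forall>p. (p, r) \<notin> Restr F C)
      \<and> inj_on snd (Restr F C)" if "C = weak_component V F v" "v \<in> V" for C v
    using diverging_tree_root of that unfolding out_forest_def by blast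
  have in_comp: "v \<in> weak_component V F v" if "v \<in> V" for v
    using that unfolding weak_component_def by blast
  have ind: "in_deg_le1 F" unfolding in_deg_le1_def
  proof (intro allI impI)
    fix u u' v assume uv: "(u, v) \<in> F" "(u', v) \<in> F"
    define C where "C = weak_component V F v"
    have v: "v \<in> V" using uv FV by blast
    have "u \<in> C" "u' \<in> C" using weak_component_pred_closed[OF FV] in_comp[OF v] uv
      unfolding C_def pred_closed_def by blast+
    then have "(u, v) \<in> Restr F C" "(u', v) \<in> Restr F C" using uv in_comp[OF v] C_def by blast+
    then show "u = u'" using comp[OF C_def v] inj_onD[of snd "Restr F C" "(u, v)" "(u', v)"] by auto
  qed
  have "(x, x) \<notin> F\<^sup>+" for x
  proof
    assume cyc: "(x, x) \<in> F\<^sup>+"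
    then obtain x' where "(x, x') \<in> F" using tranclD by metis
    then have x: "x \<in> V" using FV by blast
    define C where "C = weak_component V F x"
    obtain r where r: "r \<in> C" "\<forall>y\<in>C. (r, y) \<in> (Restr F C)\<^sup>*" "\<forall>p. (p, r) \<notin> Restr F C"
      using comp[OF C_def x] by blast
    have "(r, x) \<in> F\<^sup>*" using r(2) in_comp[OF x] rtrancl_mono[of "Restr F C" F] C_def by blast
    then have "(r, r) \<in> F\<^sup>+" using cyc cycle_reaches_ancestors[OF ind cyc]
      by (meson rtrancl_trancl_trancl trancl_rtrancl_trancl)
    then obtain p where "(p, r) \<in> F" using tranclD2 by metis
    moreover then have "p \<in> C" using weak_component_pred_closed[OF FV] r(1)
      unfolding C_def pred_closed_def by blast
    ultimately show False using r(1,3) by blast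
  qed
  then show ?thesis using FE ind unfolding acyclic_def by blast
qed

lemma branching_imp_out_forest:
  assumes FE: "F \<subseteq> E" and ind: "in_deg_le1 F" and ac: "acyclic F"
  shows "out_forest V E F"
  unfolding out_forest_def
proof (intro conjI ballI)
  show "F \<subseteq> E" by fact
  have FV: "F \<subseteq> V \<times> V" using arcs_in_V FE by blast
  have finF: "finite F" using FE finite_E finite_subset by blast
  fix v assume v: "v \<in> V"
  define C where "C = weak_component V F v"
  have pc: "pred_closed F C" using weak_component_pred_closed[OF FV] C_def by blast
  obtain r where r: "in_tree_rooted_at F v r" using in_tree_root_exists[OF finF ac] by blast
  have all_r: "in_tree_rooted_at F y r" if "y \<in> C" for y
    using weak_component_common_root[OF finF ind ac r] that unfolding C_def weak_component_def by blast
  have rv: "(r, v) \<in> F\<^sup>*" using r unfolding in_tree_rooted_at_def by blast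
  have "r \<in> V" using v rv FV by (cases "r = v") (auto dest: tranclD simp: rtrancl_eq_or_trancl)
  moreover have "(v, r) \<in> (F \<union> F\<inverse>)\<^sup>*"
    using rv rtrancl_mono[of "F\<inverse>" "F \<union> F\<inverse>"] by (auto simp: rtrancl_converse)
  ultimately have rC: "r \<in> C" unfolding C_def weak_component_def by blast
  have vC: "v \<in> C" using v unfolding C_def weak_component_def by blast
  have finC: "finite C" using finite_V unfolding C_def weak_component_def by simp
  have reach: "\<forall>y\<in>C. (r, y) \<in> (Restr F C)\<^sup>*"
    using all_r rtrancl_pred_closed_inside[OF pc] unfolding in_tree_rooted_at_def by blast
  have img: "snd ` (Restr F C) = C - {r}"
  proof
    show "snd ` (Restr F C) \<subseteq> C - {r}" using r unfolding in_tree_rooted_at_def by force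
    show "C - {r} \<subseteq> snd ` (Restr F C)"
    proof
      fix y assume y: "y \<in> C - {r}"
      then have "(r, y) \<in> F\<^sup>+" using all_r unfolding in_tree_rooted_at_def
        by (auto simp: rtrancl_eq_or_trancl)
      then obtain q where q: "(q, y) \<in> F" using tranclD2 by metis
      then have "q \<in> C" using pc y unfolding pred_closed_def by blast
      then show "y \<in> snd ` (Restr F C)" using q y by force
    qed
  qed
  have "inj_on snd (Restr F C)" using ind unfolding in_deg_le1_def inj_on_def by auto
  then have "card (Restr F C) = card C - 1" using card_image img rC finC by fastforce
  then show "diverging_tree (weak_component V F v) (Restr F (weak_component V F v))"
    unfolding diverging_tree_def C_def[symmetric] using finC vC reach rC by blast
qed

lemma out_forest_iff: "out_forest V E F \<longleftrightarrow> F \<subseteq> E \<and> in_deg_le1 F \<and> acyclic F"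
  by (meson out_forest_imp_branching branching_imp_out_forest)


section \<open>Maximum out-forests\<close>

lemma max_out_forests_finite: "finite (max_out_forests V E)"
proof -
  have "max_out_forests V E \<subseteq> Pow E" unfolding max_out_forests_def out_forest_def by blast
  then show ?thesis using finite_E finite_subset by blast
qed

lemma max_out_forests_nonempty: "max_out_forests V E \<noteq> {}"
proof -
  have "out_forest V E {}" unfolding out_forest_iff by (simp add: in_deg_le1_def acyclic_def)
  moreover have "\<forall>G. out_forest V E G \<longrightarrow> card G < card E + 1"
  proof (intro allI impI)
    fix G assume "out_forest V E G"
    then have "G \<subseteq> E" unfolding out_forest_def by blast
    then show "card G < card E + 1" using card_mono[OF finite_E] by (simp add: le_imp_less_Suc)
  qed
  ultimately have "\<exists>F. out_forest V E F \<and> (\<forall>G. out_forest V E G \<longrightarrow> card G \<le> card F)"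
    by (rule ex_has_greatest_nat)
  then show ?thesis unfolding max_out_forests_def by blast
qed

lemma max_out_forest_props:
  assumes "F \<in> max_out_forests V E"
  shows "F \<subseteq> E" "in_deg_le1 F" "acyclic F" "finite F"
proof -
  have "out_forest V E F" using assms unfolding max_out_forests_def by blast
  then show "F \<subseteq> E" "in_deg_le1 F" "acyclic F" by (simp_all add: out_forest_iff)
  then show "finite F" using finite_E finite_subset by blast
qed

lemma max_out_forestI:
  assumes "out_forest V E G" "F \<in> max_out_forests V E" "card F \<le> card G"
  shows "G \<in> max_out_forests V E"
  using assms unfolding max_out_forests_def by (blast intro: le_trans)

text \<open>Every E-predecessor of a root of a maximum out-forest lies in its tree:
  otherwise the entering arc could be added.\<close>
lemma max_out_forest_root_pred:
  assumes F: "F \<in> max_out_forests V E" and root: "\<forall>k. (k, v) \<notin> F" and uv: "(u, v) \<in> E"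
  shows "(v, u) \<in> F\<^sup>*"
proof (rule ccontr)
  assume vu: "(v, u) \<notin> F\<^sup>*"
  define F2 where "F2 = insert (u, v) F"
  have "out_forest V E F2" unfolding out_forest_iff F2_def
    using max_out_forest_props[OF F] in_deg_le1_insert root vu uv by simp
  then have "card F2 \<le> card F" using F unfolding max_out_forests_def by blast
  moreover have "card F2 = card F + 1"
    unfolding F2_def using max_out_forest_props(4)[OF F] root by simp
  ultimately show False by simp
qed

text \<open>Exchange step: an arc (u, x) entering the tree of a root v below v from outside
  that tree can replace the arc entering x.\<close>
lemma max_out_forest_regraft:
  assumes F: "F \<in> max_out_forests V E" and root: "\<forall>k. (k, v) \<notin> F"
    and ux: "(u, x) \<in> E" and vu: "(v, u) \<notin> F\<^sup>*" and vx: "(v, x) \<in> F\<^sup>*" and xv: "x \<noteq> v"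
  shows "\<exists>F2\<in>max_out_forests V E. (\<forall>k. (k, v) \<notin> F2) \<and> (\<forall>y. (v, y) \<in> F2\<^sup>* \<longrightarrow> (v, y) \<in> F\<^sup>* \<and> y \<noteq> x)"
proof -
  note FE = max_out_forest_props(1)[OF F] and ind = max_out_forest_props(2)[OF F]
    and ac = max_out_forest_props(3)[OF F] and finF = max_out_forest_props(4)[OF F]
  have "(v, x) \<in> F\<^sup>+" using vx xv by (simp add: rtrancl_eq_or_trancl)
  then obtain p where p: "(v, p) \<in> F\<^sup>*" "(p, x) \<in> F" using tranclD2 by metis
  have ux_new: "(u, x) \<notin> F" using ind p vu unfolding in_deg_le1_def by blast
  define F1 where "F1 = F - {(p, x)}"
  define F2 where "F2 = insert (u, x) F1"
  have no_x: "\<forall>a. (a, x) \<notin> F1" using ind p(2) unfolding F1_def in_deg_le1_def by blast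
  have "(x, u) \<notin> F1\<^sup>*"
  proof
    assume "(x, u) \<in> F1\<^sup>*"
    then have "(x, u) \<in> F\<^sup>*" using rtrancl_mono[of F1 F] unfolding F1_def by blast
    then show False using vx vu rtrancl_trans by metis
  qed
  moreover have "acyclic F1" using acyclic_subset[OF ac] unfolding F1_def by blast
  ultimately have "acyclic F2" unfolding F2_def by simp
  moreover have "in_deg_le1 F2"
    unfolding F2_def using in_deg_le1_insert[OF in_deg_le1_subset[OF ind] no_x] F1_def by blast
  moreover have "F2 \<subseteq> E" unfolding F2_def F1_def using FE ux by blast
  ultimately have of2: "out_forest V E F2" unfolding out_forest_iff by blast
  have "card F1 = card F - 1" unfolding F1_def using p(2) finF by simp
  moreover have "card F2 = card F1 + 1" unfolding F2_def F1_def using ux_new finF by simp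
  moreover have "card F \<ge> 1" using p(2) finF by (metis card_0_eq empty_iff less_one not_le)
  ultimately have "card F2 = card F" by simp
  then have max2: "F2 \<in> max_out_forests V E" using max_out_forestI[OF of2 F] by simp
  have root2: "\<forall>k. (k, v) \<notin> F2" using root xv unfolding F2_def F1_def by blast
  have "(v, y) \<in> F\<^sup>* \<and> y \<noteq> x" if "(v, y) \<in> F2\<^sup>*" for y
    using that
  proof (induction rule: rtrancl_induct)
    case base then show ?case using xv by simp
  next
    case (step y y')
    then have "(y, y') \<in> F1" using vu unfolding F2_def by blast
    then have "(y, y') \<in> F" and "y' \<noteq> x" using no_x unfolding F1_def by blast+
    then show ?case using step(3) by (blast intro: rtrancl_into_rtrancl)
  qed
  then show ?thesis using max2 root2 by blast
qed

lemma max_out_forest_root_ancestors: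
  "F \<in> max_out_forests V E \<Longrightarrow> \<forall>k. (k, v) \<notin> F \<Longrightarrow> v \<in> V \<Longrightarrow> (z, v) \<in> E\<^sup>* \<Longrightarrow> (v, z) \<in> F\<^sup>*"
proof (induction "card {y\<in>V. (v, y) \<in> F\<^sup>*}" arbitrary: F rule: less_induct)
  case less
  show ?case
  proof (rule ccontr)
    assume vz: "(v, z) \<notin> F\<^sup>*"
    define T where "T = {y\<in>V. (v, y) \<in> F\<^sup>*}"
    have "z \<notin> T" "v \<in> T" using vz less.prems(3) unfolding T_def by auto
    then obtain u x where ux: "(u, x) \<in> E" "u \<notin> T" "x \<in> T"
      using rtrancl_enters_set[OF less.prems(4)] by blast
    have vu: "(v, u) \<notin> F\<^sup>*" using ux(1,2) arcs_in_V unfolding T_def by blast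
    have vx: "(v, x) \<in> F\<^sup>*" using ux(3) unfolding T_def by blast
    have xv: "x \<noteq> v" using max_out_forest_root_pred[OF less.prems(1,2)] ux(1) vu by blast
    obtain F2 where F2: "F2 \<in> max_out_forests V E" "\<forall>k. (k, v) \<notin> F2"
      and below: "\<forall>y. (v, y) \<in> F2\<^sup>* \<longrightarrow> (v, y) \<in> F\<^sup>* \<and> y \<noteq> x"
      using max_out_forest_regraft[OF less.prems(1,2) ux(1) vu vx xv] by blast
    have "{y\<in>V. (v, y) \<in> F2\<^sup>*} \<subset> T" using below ux(3) unfolding T_def by blast
    then have "card {y\<in>V. (v, y) \<in> F2\<^sup>*} < card T"
      using finite_V psubset_card_mono[of T] unfolding T_def by simp
    then have "(v, z) \<in> F2\<^sup>*" using less.hyps F2 less.prems(3,4) unfolding T_def by blast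
    then show False using below vz by blast
  qed
qed

end


section \<open>Basis bicomponents\<close>

lemma basis_bicomponent_pred_closed: "basis_bicomponent V E K \<Longrightarrow> pred_closed E K"
  unfolding basis_bicomponent_def pred_closed_def by blast

lemma basis_bicomponent_subset: "basis_bicomponent V E K \<Longrightarrow> K \<subseteq> V"
  unfolding basis_bicomponent_def strong_component_def by blast

lemma basis_bicomponent_strongly_connected:
  "basis_bicomponent V E K \<Longrightarrow> r1 \<in> K \<Longrightarrow> r2 \<in> K \<Longrightarrow> (r1, r2) \<in> E\<^sup>*"
  unfolding basis_bicomponent_def strong_component_def by (blast intro: rtrancl_trans)

context finite_digraph
begin

text \<open>Every vertex is reachable from some basis bicomponent: the strong component of
  an ancestor with the fewest ancestors has no entering arc.\<close>
lemma basis_bicomponent_exists: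
  assumes u: "u \<in> V"
  shows "\<exists>K'. basis_bicomponent V E K' \<and> (\<exists>k\<in>K'. (k, u) \<in> E\<^sup>*)"
proof -
  define anc where "anc x = {y\<in>V. (y, x) \<in> E\<^sup>*}" for x
  define P where "P x \<longleftrightarrow> x \<in> V \<and> (x, u) \<in> E\<^sup>*" for x
  obtain x where x: "P x" "\<forall>y. P y \<longrightarrow> card (anc x) \<le> card (anc y)"
    using ex_has_least_nat[of P u "\<lambda>x. card (anc x)"] u unfolding P_def by blast
  have xV: "x \<in> V" and xu: "(x, u) \<in> E\<^sup>*" using x(1) unfolding P_def by auto
  define K' where "K' = strong_component V E x"
  have xK: "x \<in> K'" using xV unfolding K'_def strong_component_def by simp
  have "False" if pq: "(p, q) \<in> E" "p \<notin> K'" "q \<in> K'" for p q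
  proof -
    have pV: "p \<in> V" using pq arcs_in_V by blast
    have px: "(p, x) \<in> E\<^sup>*" using pq unfolding K'_def strong_component_def
      by (blast intro: converse_rtrancl_into_rtrancl)
    have "P p" unfolding P_def using pV px xu by (blast intro: rtrancl_trans)
    then have le: "card (anc x) \<le> card (anc p)" using x(2) by blast
    have "x \<notin> anc p" using pV px pq(2) unfolding anc_def K'_def strong_component_def by blast
    moreover have "x \<in> anc x" "anc p \<subseteq> anc x"
      using xV px unfolding anc_def by (auto intro: rtrancl_trans)
    ultimately have "anc p \<subset> anc x" by blast
    then have "card (anc p) < card (anc x)" using finite_V unfolding anc_def
      by (simp add: psubset_card_mono)
    then show False using le by simp
  qed
  then have "basis_bicomponent V E K'" unfolding basis_bicomponent_def K'_def using xV by blast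
  then show ?thesis using xK xu by blast
qed

text \<open>No arc enters K^+ from outside: a predecessor of a vertex of K^+ is reachable
  from the same basis bicomponents, hence only from K.\<close>
lemma reach_plus_pred_closed: "pred_closed E (reach_plus V E K)"
  unfolding pred_closed_def
proof (intro allI impI)
  fix u v assume uv: "(u, v) \<in> E" and v: "v \<in> reach_plus V E K"
  have uV: "u \<in> V" using uv arcs_in_V by blast
  have to_v: "(k, v) \<in> E\<^sup>*" if "(k, u) \<in> E\<^sup>*" for k using that uv by simp
  obtain K' k' where K': "basis_bicomponent V E K'" "k' \<in> K'" "(k', u) \<in> E\<^sup>*"
    using basis_bicomponent_exists[OF uV] by blast
  then have "K' = K" using v to_v unfolding reach_plus_def by blast
  then show "u \<in> reach_plus V E K" using v K' uV to_v unfolding reach_plus_def by blast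
qed

end

locale digraph_basis = finite_digraph +
  fixes K :: "'a set"
  assumes basis: "basis_bicomponent V E K"
begin

lemma finite_K: "finite K"
  using finite_subset[OF basis_bicomponent_subset[OF basis] finite_V] .

sublocale restricted: finite_digraph K "Restr E K"
  by unfold_locales (use finite_K in auto)

text \<open>A maximum out-forest has at most one root in K (K is strongly connected, so
  each of two roots would have to lie in the tree of the other).\<close>
lemma max_out_forest_unique_root_in_basis:
  assumes F: "F \<in> max_out_forests V E"
    and r1: "r1 \<in> K" "\<forall>k. (k, r1) \<notin> F" and r2: "r2 \<in> K" "\<forall>k. (k, r2) \<notin> F"
  shows "r1 = r2"
proof -
  have "r1 \<in> V" using basis_bicomponent_subset[OF basis] r1(1) by blast
  then have "(r1, r2) \<in> F\<^sup>*"
    using max_out_forest_root_ancestors[OF F r1(2)] basis_bicomponent_strongly_connected[OF basis r2(1) r1(1)]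
    by simp
  then show ?thesis using reach_root_eq[OF _ r2(2)] by simp
qed

text \<open>In a maximum out-forest no vertex of K^+ - K is a root: its tree would contain K,
  whereas nothing outside K reaches K.\<close>
lemma max_out_forest_parent_exists:
  assumes F: "F \<in> max_out_forests V E" and v: "v \<in> reach_plus V E K - K"
  shows "\<exists>u. (u, v) \<in> F"
proof (rule ccontr)
  assume "\<not> (\<exists>u. (u, v) \<in> F)"
  then have root: "\<forall>u. (u, v) \<notin> F" by blast
  obtain k where k: "k \<in> K" "(k, v) \<in> E\<^sup>*" using v unfolding reach_plus_def by blast
  have "v \<in> V" using v unfolding reach_plus_def by blast
  then have "(v, k) \<in> F\<^sup>*" using max_out_forest_root_ancestors[OF F root] k(2) by simp
  then have "(v, k) \<in> E\<^sup>*" using rtrancl_mono[OF max_out_forest_props(1)[OF F]] by blast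
  then have "v \<in> K" using rtrancl_pred_closed_inside[OF basis_bicomponent_pred_closed[OF basis] _ k(1)]
    by blast
  then show False using v by blast
qed

end


section \<open>Weighted sums over exchange-closed families\<close>

lemma subgraph_weight_split:
  assumes "finite F"
  shows "subgraph_weight w F = subgraph_weight w (F \<inter> A) * subgraph_weight w (F - A)"
proof -
  have "F = (F \<inter> A) \<union> (F - A)" by blast
  then show ?thesis unfolding subgraph_weight_def
    using prod.union_disjoint[of "F \<inter> A" "F - A" w] assms by auto
qed

lemma subgraph_weight_pos: "(\<And>e. e \<in> F \<Longrightarrow> w e > 0) \<Longrightarrow> subgraph_weight w F > 0"
  unfolding subgraph_weight_def by (rule prod_pos) simp

text \<open>If M is closed under exchanging A-parts, then F \<mapsto> (F \<inter> A, F - A) is a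
  bijection from M onto the product of the two sets of parts, so sums of products split.\<close>
lemma sum_exchange_closed:
  fixes f g :: "'b set \<Rightarrow> real"
  assumes finM: "finite M" and exch: "\<forall>F\<in>M. \<forall>F'\<in>M. (F \<inter> A) \<union> (F' - A) \<in> M"
  shows "(\<Sum>F\<in>M. f (F \<inter> A) * g (F - A)) =
         (\<Sum>X\<in>(\<lambda>F. F \<inter> A) ` M. f X) * (\<Sum>Y\<in>(\<lambda>F. F - A) ` M. g Y)"
proof -
  define h where "h F = (F \<inter> A, F - A)" for F
  have inj: "inj_on h M" unfolding h_def by (rule inj_onI) (simp, blast)
  have img: "h ` M = ((\<lambda>F. F \<inter> A) ` M) \<times> ((\<lambda>F. F - A) ` M)"
  proof
    show "h ` M \<subseteq> ((\<lambda>F. F \<inter> A) ` M) \<times> ((\<lambda>F. F - A) ` M)" unfolding h_def by blast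
    show "((\<lambda>F. F \<inter> A) ` M) \<times> ((\<lambda>F. F - A) ` M) \<subseteq> h ` M"
    proof
      fix p assume "p \<in> ((\<lambda>F. F \<inter> A) ` M) \<times> ((\<lambda>F. F - A) ` M)"
      then obtain F1 F2 where F12: "F1 \<in> M" "F2 \<in> M" "p = (F1 \<inter> A, F2 - A)" by blast
      then have "(F1 \<inter> A) \<union> (F2 - A) \<in> M" using exch by blast
      moreover have "h ((F1 \<inter> A) \<union> (F2 - A)) = p" unfolding h_def F12(3) by auto
      ultimately show "p \<in> h ` M" by blast
    qed
  qed
  have "(\<Sum>F\<in>M. f (F \<inter> A) * g (F - A)) = (\<Sum>p\<in>h ` M. f (fst p) * g (snd p))"
    using sum.reindex[OF inj, of "\<lambda>p. f (fst p) * g (snd p)"] unfolding h_def by simp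
  also have "\<dots> = (\<Sum>X\<in>(\<lambda>F. F \<inter> A) ` M. \<Sum>Y\<in>(\<lambda>F. F - A) ` M. f X * g Y)"
    unfolding img by (simp add: sum.cartesian_product case_prod_beta)
  also have "\<dots> = (\<Sum>X\<in>(\<lambda>F. F \<inter> A) ` M. f X) * (\<Sum>Y\<in>(\<lambda>F. F - A) ` M. g Y)"
    by (rule sum_product[symmetric])
  finally show ?thesis .
qed

lemma normalized_weight_exchange_closed:
  fixes M :: "('a \<times> 'a) set set"
  assumes finM: "finite M" and neM: "M \<noteq> {}" and fin: "\<forall>F\<in>M. finite F"
    and pos: "\<forall>F\<in>M. \<forall>e\<in>F. w e > 0"
    and exch: "\<forall>F\<in>M. \<forall>F'\<in>M. (F \<inter> A) \<union> (F' - A) \<in> M"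
    and P: "\<forall>F\<in>M. P F \<longleftrightarrow> Q (F - A)"
  shows "(\<Sum>F\<in>{F\<in>M. P F}. subgraph_weight w F) / (\<Sum>F\<in>M. subgraph_weight w F)
       = (\<Sum>Y\<in>{Y\<in>(\<lambda>F. F - A) ` M. Q Y}. subgraph_weight w Y) / (\<Sum>Y\<in>(\<lambda>F. F - A) ` M. subgraph_weight w Y)"
proof -
  define wt where "wt = subgraph_weight w"
  define S where "S = (\<Sum>X\<in>(\<lambda>F. F \<inter> A) ` M. wt X)"
  have "S > 0" unfolding S_def wt_def
    using finM neM pos by (intro sum_pos subgraph_weight_pos) auto
  have split: "wt F = wt (F \<inter> A) * wt (F - A)" if "F \<in> M" for F
    unfolding wt_def using subgraph_weight_split fin that by blast
  have "(\<Sum>F\<in>{F\<in>M. P F}. wt F) = (\<Sum>F\<in>M. if P F then wt F else 0)"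
    by (rule sum.inter_filter[OF finM])
  also have "\<dots> = (\<Sum>F\<in>M. wt (F \<inter> A) * (if Q (F - A) then wt (F - A) else 0))"
    using P split by (intro sum.cong) auto
  also have "\<dots> = S * (\<Sum>Y\<in>(\<lambda>F. F - A) ` M. if Q Y then wt Y else 0)"
    unfolding S_def by (rule sum_exchange_closed[OF finM exch])
  also have "\<dots> = S * (\<Sum>Y\<in>{Y\<in>(\<lambda>F. F - A) ` M. Q Y}. wt Y)"
    using finM by (simp add: sum.inter_filter)
  finally have num: "(\<Sum>F\<in>{F\<in>M. P F}. wt F) = S * (\<Sum>Y\<in>{Y\<in>(\<lambda>F. F - A) ` M. Q Y}. wt Y)" .
  have "(\<Sum>F\<in>M. wt F) = (\<Sum>F\<in>M. wt (F \<inter> A) * wt (F - A))"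
    using split by (intro sum.cong) auto
  also have "\<dots> = S * (\<Sum>Y\<in>(\<lambda>F. F - A) ` M. wt Y)"
    unfolding S_def by (rule sum_exchange_closed[OF finM exch])
  finally have den: "(\<Sum>F\<in>M. wt F) = S * (\<Sum>Y\<in>(\<lambda>F. F - A) ` M. wt Y)" .
  show ?thesis using num den \<open>S > 0\<close> unfolding wt_def by simp
qed



section \<open>Restriction to a basis bicomponent\<close>

context digraph_basis
begin

text \<open>An out-forest of the restriction to K can replace the K x K part of an out-forest
  of the whole digraph: no arc enters K, so in-degrees and cycles stay separated.\<close>
lemma out_forest_glue_basis:
  assumes F: "out_forest V E F" and T: "out_forest K (Restr E K) T"
  shows "out_forest V E (T \<union> (F - K \<times> K))"
proof -
  have T': "T \<subseteq> Restr E K" "in_deg_le1 T" "acyclic T" using T by (simp_all add: restricted.out_forest_iff)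
  have F': "F \<subseteq> E" "in_deg_le1 F" "acyclic F" using F by (simp_all add: out_forest_iff)
  have pcE: "pred_closed E K" using basis_bicomponent_pred_closed[OF basis] .
  define G where "G = T \<union> (F - K \<times> K)"
  have GE: "G \<subseteq> E" unfolding G_def using T'(1) F'(1) by blast
  have outside: "v \<notin> K" if "(u, v) \<in> F - K \<times> K" for u v
    using that F'(1) pcE unfolding pred_closed_def by blast
  have "in_deg_le1 G" unfolding in_deg_le1_def
  proof (intro allI impI)
    fix u u' v assume uv: "(u, v) \<in> G" "(u', v) \<in> G"
    show "u = u'"
    proof (cases "v \<in> K")
      case True
      then have "(u, v) \<in> T" "(u', v) \<in> T" using uv outside unfolding G_def by blast+
      then show ?thesis using T'(2) unfolding in_deg_le1_def by blast
    next
      case False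
      then have "(u, v) \<in> F" "(u', v) \<in> F" using uv T'(1) unfolding G_def by blast+
      then show ?thesis using F'(2) unfolding in_deg_le1_def by blast
    qed
  qed
  moreover have "acyclic G"
  proof (rule acyclic_pred_closed_split[OF pred_closed_subset[OF pcE GE]])
    have "Restr G K \<subseteq> T" unfolding G_def by blast
    then show "acyclic (Restr G K)" by (rule acyclic_subset[OF T'(3)])
    have "Restr G (- K) \<subseteq> F" unfolding G_def using T'(1) by blast
    then show "acyclic (Restr G (- K))" by (rule acyclic_subset[OF F'(3)])
  qed
  ultimately show ?thesis using GE unfolding G_def by (simp add: out_forest_iff)
qed

lemma out_forest_restrict_basis:
  assumes "out_forest V E F"
  shows "out_forest K (Restr E K) (Restr F K)"
proof -
  have F: "F \<subseteq> E" "in_deg_le1 F" "acyclic F" using assms by (simp_all add: out_forest_iff)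
  have "Restr F K \<subseteq> Restr E K" using F(1) by blast
  moreover have "in_deg_le1 (Restr F K)" by (rule in_deg_le1_subset[OF F(2) Int_lower1])
  moreover have "acyclic (Restr F K)" by (rule acyclic_subset[OF F(3) Int_lower1])
  ultimately show ?thesis by (simp add: restricted.out_forest_iff)
qed

lemma max_out_forests_basis_exchange:
  assumes F: "F \<in> max_out_forests V E"
  shows "Restr F K \<in> max_out_forests K (Restr E K)"
    and "T \<in> max_out_forests K (Restr E K) \<Longrightarrow> T \<union> (F - K \<times> K) \<in> max_out_forests V E"
proof -
  have ofF: "out_forest V E F" and maxF: "\<forall>G. out_forest V E G \<longrightarrow> card G \<le> card F"
    using F unfolding max_out_forests_def by auto
  have finF: "finite F" using max_out_forest_props(4)[OF F] .
  have card_F: "card F = card (Restr F K) + card (F - K \<times> K)"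
    by (rule card_Int_Diff[OF finF])
  have card_glue: "card (T \<union> (F - K \<times> K)) = card T + card (F - K \<times> K)"
    if "out_forest K (Restr E K) T" for T
  proof -
    have "T \<subseteq> K \<times> K" using that unfolding out_forest_def by blast
    then show ?thesis using finite_K finF by (intro card_Un_disjoint) (auto intro: finite_subset)
  qed
  have rF: "out_forest K (Restr E K) (Restr F K)" using out_forest_restrict_basis[OF ofF] .
  have "card T \<le> card (Restr F K)" if T: "out_forest K (Restr E K) T" for T
    using maxF out_forest_glue_basis[OF ofF T] card_glue[OF T] card_F by fastforce
  then show "Restr F K \<in> max_out_forests K (Restr E K)"
    using rF unfolding max_out_forests_def by blast
  assume T: "T \<in> max_out_forests K (Restr E K)"
  then have ofT: "out_forest K (Restr E K) T" and "card (Restr F K) \<le> card T"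
    using rF unfolding max_out_forests_def by auto
  then have "card F \<le> card (T \<union> (F - K \<times> K))" using card_glue[OF ofT] card_F by simp
  then show "T \<union> (F - K \<times> K) \<in> max_out_forests V E"
    using max_out_forestI[OF out_forest_glue_basis[OF ofF ofT] F] by blast
qed

lemma in_tree_rooted_at_restrict_basis:
  assumes FE: "F \<subseteq> E" and i: "i \<in> K" and j: "j \<in> K"
  shows "in_tree_rooted_at F i j \<longleftrightarrow> in_tree_rooted_at (Restr F K) i j"
proof -
  have pc: "pred_closed F K" using pred_closed_subset[OF basis_bicomponent_pred_closed[OF basis] FE] .
  have "(j, i) \<in> F\<^sup>* \<longleftrightarrow> (j, i) \<in> (Restr F K)\<^sup>*"
    using rtrancl_pred_closed_inside[OF pc _ i] rtrancl_mono[of "Restr F K" F] by blast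
  moreover have "(\<forall>k. (k, j) \<notin> F) \<longleftrightarrow> (\<forall>k. (k, j) \<notin> Restr F K)"
    using pc j unfolding pred_closed_def by blast
  ultimately show ?thesis unfolding in_tree_rooted_at_def by blast
qed

lemma Jbar_restrict_basis:
  assumes w_pos: "\<forall>e\<in>E. w e > 0" and i: "i \<in> K" and j: "j \<in> K"
  shows "Jbar K (Restr E K) w i j = Jbar V E w i j"
proof -
  let ?M = "max_out_forests V E" and ?A = "- (K \<times> K)"
  have outer_part: "F - ?A = Restr F K" for F :: "('a \<times> 'a) set" by blast
  have exch: "\<forall>F\<in>?M. \<forall>F'\<in>?M. (F \<inter> ?A) \<union> (F' - ?A) \<in> ?M"
  proof (intro ballI)
    fix F F' assume F: "F \<in> ?M" and F': "F' \<in> ?M"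
    have "(F \<inter> ?A) \<union> (F' - ?A) = Restr F' K \<union> (F - K \<times> K)" by blast
    then show "(F \<inter> ?A) \<union> (F' - ?A) \<in> ?M"
      using max_out_forests_basis_exchange(2)[OF F max_out_forests_basis_exchange(1)[OF F']] by simp
  qed
  have tree: "\<forall>F\<in>?M. in_tree_rooted_at F i j \<longleftrightarrow> in_tree_rooted_at (F - ?A) i j"
    using in_tree_rooted_at_restrict_basis[OF _ i j] max_out_forest_props(1) outer_part by simp
  have parts: "(\<lambda>F. F - ?A) ` ?M = max_out_forests K (Restr E K)"
  proof
    show "(\<lambda>F. F - ?A) ` ?M \<subseteq> max_out_forests K (Restr E K)"
      using max_out_forests_basis_exchange(1) outer_part by auto
    show "max_out_forests K (Restr E K) \<subseteq> (\<lambda>F. F - ?A) ` ?M"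
    proof
      fix T assume T: "T \<in> max_out_forests K (Restr E K)"
      obtain F where F: "F \<in> ?M" using max_out_forests_nonempty by blast
      have "T \<subseteq> K \<times> K" using T unfolding max_out_forests_def out_forest_def by blast
      then have "T = (T \<union> (F - K \<times> K)) - ?A" by blast
      then show "T \<in> (\<lambda>F. F - ?A) ` ?M" using max_out_forests_basis_exchange(2)[OF F T] by blast
    qed
  qed
  have fin: "\<forall>F\<in>?M. finite F" using max_out_forest_props(4) by blast
  have pos: "\<forall>F\<in>?M. \<forall>e\<in>F. w e > 0" using w_pos max_out_forest_props(1) by blast
  show ?thesis
    using normalized_weight_exchange_closed[where P="\<lambda>F. in_tree_rooted_at F i j"
        and Q="\<lambda>F. in_tree_rooted_at F i j", OF max_out_forests_finite max_out_forests_nonempty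
        fin pos exch tree]
    unfolding Jbar_def parts by simp
qed

end


section \<open>Arcs entering K^+ - K\<close>

definition arcs_into :: "'a set \<Rightarrow> ('a \<times> 'a) set" where
  "arcs_into D = {e. snd e \<in> D}"

lemma arcs_into_iff [simp]: "(u, v) \<in> arcs_into D \<longleftrightarrow> v \<in> D"
  unfolding arcs_into_def by simp

context digraph_basis
begin

lemma card_arcs_into_new:
  assumes F: "F \<in> max_out_forests V E"
  shows "card (F \<inter> arcs_into (reach_plus V E K - K)) = card (reach_plus V E K - K)"
proof -
  let ?D = "reach_plus V E K - K"
  have "snd ` (F \<inter> arcs_into ?D) = ?D"
  proof
    show "snd ` (F \<inter> arcs_into ?D) \<subseteq> ?D" unfolding arcs_into_def by auto
    show "?D \<subseteq> snd ` (F \<inter> arcs_into ?D)"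
    proof
      fix v assume v: "v \<in> ?D"
      then obtain u where "(u, v) \<in> F" using max_out_forest_parent_exists[OF F] by blast
      then show "v \<in> snd ` (F \<inter> arcs_into ?D)" using v by force
    qed
  qed
  moreover have "inj_on snd (F \<inter> arcs_into ?D)"
    using max_out_forest_props(2)[OF F] unfolding in_deg_le1_def inj_on_def by auto
  ultimately show ?thesis by (metis card_image)
qed

text \<open>The arcs entering K^+ - K of one maximum out-forest can be combined with the
  remaining arcs of another one.  Cycles are excluded by splitting at K^+ and at K.\<close>
lemma max_out_forests_exchange_new:
  assumes F: "F \<in> max_out_forests V E" and F': "F' \<in> max_out_forests V E"
  defines "A \<equiv> arcs_into (reach_plus V E K - K)"
  shows "(F \<inter> A) \<union> (F' - A) \<in> max_out_forests V E"
proof -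
  let ?Kp = "reach_plus V E K"
  note PF = max_out_forest_props[OF F] and PF' = max_out_forest_props[OF F']
  define G where "G = (F \<inter> A) \<union> (F' - A)"
  have GE: "G \<subseteq> E" unfolding G_def using PF(1) PF'(1) by blast
  have "in_deg_le1 G" unfolding in_deg_le1_def
  proof (intro allI impI)
    fix u u' v assume uv: "(u, v) \<in> G" "(u', v) \<in> G"
    show "u = u'"
    proof (cases "(u, v) \<in> A")
      case True
      then have "(u, v) \<in> F" "(u', v) \<in> F" using uv unfolding G_def A_def by auto
      then show ?thesis using PF(2) unfolding in_deg_le1_def by blast
    next
      case False
      then have "(u, v) \<in> F'" "(u', v) \<in> F'" using uv unfolding G_def A_def by auto
      then show ?thesis using PF'(2) unfolding in_deg_le1_def by blast
    qed
  qed
  moreover have "acyclic G"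
  proof (rule acyclic_pred_closed_split[OF pred_closed_subset[OF reach_plus_pred_closed GE]])
    have pcK: "pred_closed (Restr G ?Kp) K"
      using pred_closed_subset[OF basis_bicomponent_pred_closed[OF basis]] GE by blast
    show "acyclic (Restr G ?Kp)"
    proof (rule acyclic_pred_closed_split[OF pcK])
      have "Restr (Restr G ?Kp) K \<subseteq> F'" unfolding G_def A_def by auto
      then show "acyclic (Restr (Restr G ?Kp) K)" by (rule acyclic_subset[OF PF'(3)])
      have "Restr (Restr G ?Kp) (- K) \<subseteq> F" unfolding G_def A_def by auto
      then show "acyclic (Restr (Restr G ?Kp) (- K))" by (rule acyclic_subset[OF PF(3)])
    qed
    have "Restr G (- ?Kp) \<subseteq> F'" unfolding G_def A_def by auto
    then show "acyclic (Restr G (- ?Kp))" by (rule acyclic_subset[OF PF'(3)])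
  qed
  ultimately have ofG: "out_forest V E G" using GE by (simp add: out_forest_iff)
  have "card G = card (F \<inter> A) + card (F' - A)"
    unfolding G_def using PF(4) PF'(4) by (intro card_Un_disjoint) auto
  also have "\<dots> = card (F' \<inter> A) + card (F' - A)"
    using card_arcs_into_new[OF F] card_arcs_into_new[OF F'] unfolding A_def by simp
  also have "\<dots> = card F'"
    by (rule card_Int_Diff[OF PF'(4), symmetric])
  finally show ?thesis using max_out_forestI[OF ofG F'] unfolding G_def by simp
qed

lemma in_tree_root_in_basis:
  assumes F: "F \<in> max_out_forests V E" and t: "in_tree_rooted_at F i r" and r: "r \<in> reach_plus V E K"
  shows "r \<in> K"
proof (rule ccontr)
  assume "r \<notin> K"
  then obtain u where "(u, r) \<in> F" using max_out_forest_parent_exists[OF F] r by blast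
  then show False using t unfolding in_tree_rooted_at_def by blast
qed

text \<open>A tree whose root lies outside K^+ avoids K^+ entirely, so it only uses arcs not
  entering K^+ - K and survives any change of those arcs.\<close>
lemma in_tree_transfer_outside:
  assumes F: "F \<in> max_out_forests V E"
    and same: "F - arcs_into (reach_plus V E K - K) = F' - arcs_into (reach_plus V E K - K)"
    and t: "in_tree_rooted_at F i r" and r: "r \<notin> reach_plus V E K"
  shows "in_tree_rooted_at F' i r"
proof -
  let ?Kp = "reach_plus V E K" and ?A = "arcs_into (reach_plus V E K - K)"
  have kept: "(x, y) \<in> F'" if "(x, y) \<in> F" "y \<in> K \<or> y \<notin> ?Kp" for x y
  proof -
    have "(x, y) \<in> F - ?A" using that by auto
    then show ?thesis using same by blast
  qed
  have pc: "pred_closed F ?Kp"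
    using pred_closed_subset[OF reach_plus_pred_closed max_out_forest_props(1)[OF F]] .
  have "(r, i) \<in> F\<^sup>*" using t unfolding in_tree_rooted_at_def by blast
  then have "(r, i) \<in> (Restr F (- ?Kp))\<^sup>*"
    using rtrancl_pred_closed_outside[OF pc _ r] by blast
  moreover have "Restr F (- ?Kp) \<subseteq> F'" using kept by blast
  ultimately have "(r, i) \<in> F'\<^sup>*" using rtrancl_mono by blast
  moreover have "(k, r) \<notin> F'" for k
  proof
    assume "(k, r) \<in> F'"
    then have "(k, r) \<in> F' - ?A" using r by simp
    then have "(k, r) \<in> F" using same by blast
    then show False using t unfolding in_tree_rooted_at_def by blast
  qed
  ultimately show ?thesis unfolding in_tree_rooted_at_def by blast
qed

text \<open>Roots outside K^+ are handled by the previous lemma; a root in K^+ lies in K,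
  where a maximum out-forest has only one root.\<close>
lemma in_tree_transfer:
  assumes F: "F \<in> max_out_forests V E" and F': "F' \<in> max_out_forests V E"
    and same: "F - arcs_into (reach_plus V E K - K) = F' - arcs_into (reach_plus V E K - K)"
    and t: "in_tree_rooted_at F i j"
  shows "in_tree_rooted_at F' i j"
proof (cases "j \<in> reach_plus V E K")
  case False
  then show ?thesis by (rule in_tree_transfer_outside[OF F same t])
next
  case True
  then have jK: "j \<in> K" by (rule in_tree_root_in_basis[OF F t])
  obtain r where r: "in_tree_rooted_at F' i r"
    using in_tree_root_exists[OF max_out_forest_props(4,3)[OF F']] by blast
  have "r \<in> reach_plus V E K"
  proof (rule ccontr)
    assume r_out: "r \<notin> reach_plus V E K"
    then have "in_tree_rooted_at F i r" by (rule in_tree_transfer_outside[OF F' same[symmetric] r])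
    then have "j = r" by (rule in_tree_root_unique[OF max_out_forest_props(2)[OF F] t])
    then show False using True r_out by simp
  qed
  then have rK: "r \<in> K" by (rule in_tree_root_in_basis[OF F' r])
  have j_root: "(k, j) \<notin> F'" for k
  proof
    assume "(k, j) \<in> F'"
    then have "(k, j) \<in> F' - arcs_into (reach_plus V E K - K)" using jK by simp
    then have "(k, j) \<in> F" using same by blast
    then show False using t unfolding in_tree_rooted_at_def by blast
  qed
  have r_root: "\<forall>k. (k, r) \<notin> F'" using r unfolding in_tree_rooted_at_def by blast
  have "j = r" using max_out_forest_unique_root_in_basis[OF F' jK _ rK r_root] j_root by blast
  then show ?thesis using r by simp
qed

lemma Jbar_independent_of_arcs_into_new:
  assumes w_pos: "\<forall>e\<in>E. w e > 0" and w'_pos: "\<forall>e\<in>E. w' e > 0"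
    and agree: "\<forall>e. e \<notin> arcs_into (reach_plus V E K - K) \<longrightarrow> w' e = w e"
  shows "Jbar V E w' i j = Jbar V E w i j"
proof -
  let ?M = "max_out_forests V E" and ?A = "arcs_into (reach_plus V E K - K)"
  define Q where "Q Y \<longleftrightarrow> (\<exists>F\<in>?M. F - ?A = Y \<and> in_tree_rooted_at F i j)" for Y
  have tree: "\<forall>F\<in>?M. in_tree_rooted_at F i j \<longleftrightarrow> Q (F - ?A)"
    unfolding Q_def using in_tree_transfer by blast
  have fin: "\<forall>F\<in>?M. finite F" using max_out_forest_props(4) by blast
  have exch: "\<forall>F\<in>?M. \<forall>F'\<in>?M. (F \<inter> ?A) \<union> (F' - ?A) \<in> ?M"
    using max_out_forests_exchange_new by blast
  have ratio: "Jbar V E u i j = (\<Sum>Y\<in>{Y\<in>(\<lambda>F. F - ?A) ` ?M. Q Y}. subgraph_weight u Y)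
      / (\<Sum>Y\<in>(\<lambda>F. F - ?A) ` ?M. subgraph_weight u Y)" if "\<forall>e\<in>E. u e > 0" for u
  proof -
    have pos: "\<forall>F\<in>?M. \<forall>e\<in>F. u e > 0" using that max_out_forest_props(1) by blast
    show ?thesis unfolding Jbar_def
      using normalized_weight_exchange_closed[where P="\<lambda>F. in_tree_rooted_at F i j",
          OF max_out_forests_finite max_out_forests_nonempty fin pos exch tree] by simp
  qed
  have same_weight: "subgraph_weight w' Y = subgraph_weight w Y" if "Y \<in> (\<lambda>F. F - ?A) ` ?M" for Y
    using that agree unfolding subgraph_weight_def by (auto intro: prod.cong)
  have "(\<Sum>Y\<in>{Y\<in>(\<lambda>F. F - ?A) ` ?M. Q Y}. subgraph_weight w' Y)
      = (\<Sum>Y\<in>{Y\<in>(\<lambda>F. F - ?A) ` ?M. Q Y}. subgraph_weight w Y)"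
    using same_weight by (intro sum.cong) auto
  moreover have "(\<Sum>Y\<in>(\<lambda>F. F - ?A) ` ?M. subgraph_weight w' Y) = (\<Sum>Y\<in>(\<lambda>F. F - ?A) ` ?M. subgraph_weight w Y)"
    using same_weight by (intro sum.cong) auto
  ultimately show ?thesis unfolding ratio[OF w'_pos] ratio[OF w_pos] by simp
qed

end


theorem corollary2:
  fixes V :: "'a set" and E :: "('a \<times> 'a) set" and w :: "'a \<times> 'a \<Rightarrow> real" and K :: "'a set"
  assumes "weighted_digraph V E w"
    and "basis_bicomponent V E K"
  shows "(\<forall>i\<in>K. \<forall>j\<in>K. Jbar K (E \<inter> (K \<times> K)) w i j = Jbar V E w i j)
       \<and> (\<forall>a b. a \<in> reach_plus V E K \<and> b \<in> reach_plus V E K - K \<and> (a, b) \<in> E \<longrightarrow>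
            (\<forall>c::real. c > 0 \<longrightarrow>
               (\<forall>i\<in>V. \<forall>j\<in>V. Jbar V E (w((a, b) := c)) i j = Jbar V E w i j)))"
proof -
  have w_pos: "\<forall>e\<in>E. w e > 0" using assms(1) unfolding weighted_digraph_def by blast
  interpret digraph_basis V E K
    using assms unfolding weighted_digraph_def by unfold_locales auto
  have "Jbar V E (w((a, b) := c)) i j = Jbar V E w i j"
    if "b \<in> reach_plus V E K - K" "c > 0" for a b i j and c :: real
    using that w_pos by (intro Jbar_independent_of_arcs_into_new) auto
  then show ?thesis using Jbar_restrict_basis[OF w_pos] by blast
qed

end
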